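(* Let $m>n$ be coprime positive integers. The orbit of $\Lambda_0=(m(n-1),\dots,m,0\,|\,0,n,\dots,n(m-1))$ under the Weyl groupoid action on $\mathbb Z^{n|m}$ contains $\Lambda_1=(0,1,\dots,n-1\,|\,0,1,\dots,m-1)$.
   Context: Elements of $\mathbb Z^{n|m}$ are written $(a_1,\dots,a_n|b_1,\dots,b_m)$, identified with $\sum_ia_i\epsilon_i-\sum_jb_j\delta_j$. The Weyl groupoid action is generated by the permutations of $a_1,\dots,a_n$ among themselves and of $b_1,\dots,b_m$ among themselves, and, for $\alpha=\epsilon_i-\delta_j$, by $\tau_\alpha:\Pi_\alpha\to\Pi_{-\alpha}$, $\Lambda\mapsto\Lambda+n\epsilon_i-m\delta_j$ (add $n$ to $a_i$ and $m$ to $b_j$), and $\tau_{-\alpha}=\tau_\alpha^{-1}$, where $\Pi_\alpha=\{a_i=b_j\}$ and $\Pi_{-\alpha}=\{a_i-b_j=n-m\}$. The orbit of $\Lambda_0$ is the set of elements reachable from $\Lambda_0$ by finite sequences of these operations, each applied on its domain. *)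

theory Defs
  imports Main
begin

text \<open>An element (a_1,...,a_n | b_1,...,b_m) of Z^{n|m} is represented as a pair
  of integer lists (a, b) with length a = n and length b = m (list index k
  corresponds to a_{k+1}, resp. b_{k+1}).\<close>

type_synonym superwt = "int list \<times> int list"

text \<open>One generating step of the Weyl groupoid action on Z^{n|m}:
  a transposition of two a-entries, a transposition of two b-entries,
  tau_alpha for alpha = eps_i - delta_j (defined on a_i = b_j, adds n to a_i and m to b_j),
  or its inverse tau_{-alpha} (defined on a_i - b_j = n - m, subtracts n from a_i and m from b_j).\<close>

definition weyl_step :: "nat \<Rightarrow> nat \<Rightarrow> superwt \<Rightarrow> superwt \<Rightarrow> bool" where
  "weyl_step n m X Y \<longleftrightarrow>
     (let a = fst X; b = snd X in
       length a = n \<and> length b = m \<and>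
       ((\<exists>i<n. \<exists>j<n. Y = (a[i := a!j, j := a!i], b))
      \<or> (\<exists>i<m. \<exists>j<m. Y = (a, b[i := b!j, j := b!i]))
      \<or> (\<exists>i<n. \<exists>j<m. a!i = b!j \<and> Y = (a[i := a!i + int n], b[j := b!j + int m]))
      \<or> (\<exists>i<n. \<exists>j<m. a!i - b!j = int n - int m \<and>
                        Y = (a[i := a!i - int n], b[j := b!j - int m]))))"

definition in_weyl_orbit :: "nat \<Rightarrow> nat \<Rightarrow> superwt \<Rightarrow> superwt \<Rightarrow> bool" where
  "in_weyl_orbit n m X Y \<longleftrightarrow> (weyl_step n m)\<^sup>*\<^sup>* X Y"

end

theory Submission
  imports Defs "HOL-Library.Multiset" "HOL-Number_Theory.Cong"
begin

text \<open>Lower the weight level by level: at level \<open>t\<close> every coordinate \<open>x > t\<close> of the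
  \<open>a\<close>-part is replaced by the least value \<open>\<ge> t\<close> congruent to \<open>x\<close> mod \<open>n\<close>, and every
  coordinate of the \<open>b\<close>-part likewise mod \<open>m\<close>. Going from level \<open>t + 1\<close> to \<open>t\<close> changes
  exactly the coordinates equal to \<open>t + n\<close> (resp. \<open>t + m\<close>) that are congruent to \<open>t\<close>.
  Since \<open>m\<close> and \<open>n\<close> are coprime, the coordinates \<open>m i\<close> of \<open>\<Lambda>\<^sub>0\<close> have distinct residues
  mod \<open>n\<close> and the \<open>n j\<close> distinct residues mod \<open>m\<close>, so at most one coordinate on each side
  moves; and an \<open>a\<close>-coordinate moves iff a \<open>b\<close>-coordinate does, so each level is one
  application of \<open>\<tau>\<^sub>-\<^sub>\<alpha>\<close>. Going from level \<open>m n\<close> (which is \<open>\<Lambda>\<^sub>0\<close>) down to level \<open>0\<close> leaves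
  the residues, i.e. permutations of \<open>0, \<dots>, n - 1\<close> and \<open>0, \<dots>, m - 1\<close>, and transpositions
  sort them into \<open>\<Lambda>\<^sub>1\<close>.\<close>

definition swap_step :: "nat \<Rightarrow> 'a list \<Rightarrow> 'a list \<Rightarrow> bool" where
  "swap_step n xs ys \<longleftrightarrow> length xs = n \<and> (\<exists>i<n. \<exists>j<n. ys = xs[i := xs ! j, j := xs ! i])"

lemma swap_steps_Cons:
  assumes "(swap_step n)\<^sup>*\<^sup>* xs ys"
  shows "(swap_step (Suc n))\<^sup>*\<^sup>* (x # xs) (x # ys)"
  using assms
proof (induction rule: rtranclp_induct)
  case (step ys zs)
  then obtain i j where "length ys = n" "i < n" "j < n" "zs = ys[i := ys ! j, j := ys ! i]"
    unfolding swap_step_def by blast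
  then have "swap_step (Suc n) (x # ys) (x # zs)"
    unfolding swap_step_def by (intro conjI exI[of _ "Suc i"] exI[of _ "Suc j"]) auto
  with step.IH show ?case by simp
qed simp

lemma swap_steps_if_mset_eq:
  "mset xs = mset ys \<Longrightarrow> (swap_step (length xs))\<^sup>*\<^sup>* xs ys"
proof (induction ys arbitrary: xs)
  case (Cons y ys)
  then obtain k where k: "k < length xs" "xs ! k = y"
    by (metis in_set_conv_nth list.set_intros(1) set_mset_mset)
  then obtain x xs' where xs: "xs = x # xs'"
    by (cases xs) auto
  define zs where "zs = xs[0 := xs ! k, k := xs ! 0]"
  have "swap_step (length xs) xs zs"
    unfolding swap_step_def zs_def using k xs by (intro conjI exI[of _ 0] exI[of _ k]) auto
  moreover have "zs = y # tl zs"
    unfolding zs_def using k xs by (cases k) auto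
  moreover have "mset zs = mset xs"
    unfolding zs_def using k xs by (metis length_greater_0_conv list.discI mset_swap)
  ultimately have "mset (y # tl zs) = mset (y # ys)"
    using Cons.prems by metis
  then have "mset (tl zs) = mset ys"
    by simp
  then have "(swap_step (length xs'))\<^sup>*\<^sup>* (tl zs) ys"
    using Cons.IH \<open>mset zs = mset xs\<close> xs by (metis length_tl list.sel(3) mset_eq_length)
  then have "(swap_step (length xs))\<^sup>*\<^sup>* (y # tl zs) (y # ys)"
    unfolding xs length_Cons by (rule swap_steps_Cons)
  then have "(swap_step (length xs))\<^sup>*\<^sup>* zs (y # ys)"
    using \<open>zs = y # tl zs\<close> by simp
  with \<open>swap_step (length xs) xs zs\<close> show ?case
    by (rule converse_rtranclp_into_rtranclp)
qed simp

lemma weyl_steps_swap_fst: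
  assumes "(swap_step n)\<^sup>*\<^sup>* a a'" "length b = m"
  shows "(weyl_step n m)\<^sup>*\<^sup>* (a, b) (a', b)"
  using assms(1)
proof (induction rule: rtranclp_induct)
  case (step a' a'')
  then obtain i j where "length a' = n" "i < n" "j < n" "a'' = a'[i := a' ! j, j := a' ! i]"
    unfolding swap_step_def by blast
  then have "weyl_step n m (a', b) (a'', b)"
    using assms(2) unfolding weyl_step_def Let_def by simp blast
  with step.IH show ?case by simp
qed simp

lemma weyl_steps_swap_snd:
  assumes "(swap_step m)\<^sup>*\<^sup>* b b'" "length a = n"
  shows "(weyl_step n m)\<^sup>*\<^sup>* (a, b) (a, b')"
  using assms(1)
proof (induction rule: rtranclp_induct)
  case (step b' b'')
  then obtain i j where "length b' = m" "i < m" "j < m" "b'' = b'[i := b' ! j, j := b' ! i]"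
    unfolding swap_step_def by blast
  then have "weyl_step n m (a, b') (a, b'')"
    using assms(2) unfolding weyl_step_def Let_def by simp blast
  with step.IH show ?case by simp
qed simp

lemma weyl_steps_if_mset_eq:
  assumes "length a = n" "length b = m" "mset a = mset a'" "mset b = mset b'"
  shows "(weyl_step n m)\<^sup>*\<^sup>* (a, b) (a', b')"
proof -
  have "(weyl_step n m)\<^sup>*\<^sup>* (a, b) (a', b)"
    using swap_steps_if_mset_eq[OF assms(3)] assms(1,2) by (metis weyl_steps_swap_fst)
  moreover have "(weyl_step n m)\<^sup>*\<^sup>* (a', b) (a', b')"
    using swap_steps_if_mset_eq[OF assms(4)] assms by (metis weyl_steps_swap_snd mset_eq_length)
  ultimately show ?thesis
    by (rule rtranclp_trans)
qed

definition lower_to :: "int \<Rightarrow> int \<Rightarrow> int \<Rightarrow> int" where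
  "lower_to p t x = (if x \<le> t then x else t + (x - t) mod p)"

definition descends_to :: "int \<Rightarrow> int \<Rightarrow> int \<Rightarrow> bool" where
  "descends_to p t x \<longleftrightarrow> t < x \<and> p dvd x - t"

lemma lower_to_le: "x \<le> t \<Longrightarrow> lower_to p t x = x"
  unfolding lower_to_def by simp

lemma lower_to_0: "0 \<le> x \<Longrightarrow> lower_to p 0 x = x mod p"
  unfolding lower_to_def by (cases "x = 0") simp_all

lemma lower_to_succ: "t < x \<Longrightarrow> lower_to p (t + 1) x = t + 1 + (x - (t + 1)) mod p"
  unfolding lower_to_def by (cases "x = t + 1") simp_all

lemma mod_succ_if_not_dvd:
  fixes a p :: int
  assumes "0 < p" "\<not> p dvd a + 1"
  shows "(a + 1) mod p = a mod p + 1"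
proof -
  have "a mod p + 1 \<noteq> p"
  proof
    assume "a mod p + 1 = p"
    then have "(a + 1) mod p = 0"
      using mod_add_left_eq[of a p 1] by simp
    with assms(2) show False
      by (simp add: dvd_eq_mod_eq_0)
  qed
  then have "a mod p + 1 < p"
    using pos_mod_bound[OF assms(1), of a] by linarith
  have "(a + 1) mod p = (a mod p + 1) mod p"
    by (simp add: mod_add_left_eq)
  also have "\<dots> = a mod p + 1"
    using \<open>a mod p + 1 < p\<close> assms(1) by simp
  finally show ?thesis .
qed

lemma lower_to_succ_eq:
  assumes "0 < p" "\<not> descends_to p t x"
  shows "lower_to p (t + 1) x = lower_to p t x"
proof (cases "t < x")
  case True
  then have "\<not> p dvd (x - (t + 1)) + 1"
    using assms(2) unfolding descends_to_def by simp
  then have "lower_to p t x = t + 1 + (x - (t + 1)) mod p"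
    using True mod_succ_if_not_dvd[OF assms(1)] unfolding lower_to_def by fastforce
  with True show ?thesis
    by (simp add: lower_to_succ)
qed (simp add: lower_to_def)

lemma lower_to_descends:
  assumes "0 < p" "descends_to p t x"
  shows "lower_to p (t + 1) x = t + p" and "lower_to p t x = t"
proof -
  have "(x - (t + 1)) mod p = -1 mod p"
    using assms(2) unfolding descends_to_def mod_eq_dvd_iff by simp
  then show "lower_to p (t + 1) x = t + p"
    using assms zmod_minus1 by (simp add: lower_to_succ descends_to_def)
  show "lower_to p t x = t"
    using assms(2) unfolding descends_to_def lower_to_def by simp
qed

lemma map_lower_to_descends:
  assumes "0 < p" "distinct (map (\<lambda>x. x mod p) xs)"
    and "k < length xs" "descends_to p t (xs ! k)"
  shows "map (lower_to p t) xs = (map (lower_to p (t + 1)) xs)[k := t]"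
    and "map (lower_to p (t + 1)) xs ! k = t + p"
proof -
  have "\<not> descends_to p t (xs ! i)" if "i < length xs" "i \<noteq> k" for i
  proof
    assume "descends_to p t (xs ! i)"
    then have "xs ! i mod p = t mod p" and "xs ! k mod p = t mod p"
      using assms(4) unfolding descends_to_def by (simp_all add: mod_eq_dvd_iff)
    then show False
      using nth_eq_iff_index_eq[OF assms(2), of i k] assms(3) that by simp
  qed
  then show "map (lower_to p t) xs = (map (lower_to p (t + 1)) xs)[k := t]"
    using assms by (intro nth_equalityI) (auto simp: nth_list_update lower_to_succ_eq lower_to_descends)
  show "map (lower_to p (t + 1)) xs ! k = t + p"
    using assms by (simp add: lower_to_descends)
qed

lemma mset_residues_eq_upt:
  assumes "0 < p" "length xs = p" "distinct (map (\<lambda>x. x mod int p) xs)"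
  shows "mset (map (\<lambda>x. x mod int p) xs) = mset (map int [0..<p])"
proof -
  let ?r = "map (\<lambda>x. x mod int p) xs"
  have "set ?r \<subseteq> {0..<int p}"
    using assms(1) by auto
  moreover have "card (set ?r) = card {0..<int p}"
    using distinct_card[OF assms(3)] assms(2) by simp
  ultimately have "set ?r = set (map int [0..<p])"
    by (simp add: card_subset_eq image_int_atLeastLessThan)
  moreover have "distinct (map int [0..<p])"
    by (simp add: distinct_map)
  ultimately show ?thesis
    using assms(3) set_eq_iff_mset_eq_distinct by blast
qed

definition lower_wt :: "nat \<Rightarrow> nat \<Rightarrow> int \<Rightarrow> superwt \<Rightarrow> superwt" where
  "lower_wt n m t X = (map (lower_to (int n) t) (fst X), map (lower_to (int m) t) (snd X))"

context
  fixes n m :: nat and a b :: "int list"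
  assumes pos: "0 < n" "0 < m"
    and lengths: "length a = n" "length b = m"
    and distinct_residues: "distinct (map (\<lambda>x. x mod int n) a)" "distinct (map (\<lambda>y. y mod int m) b)"
begin

lemma weyl_step_lower_wt:
  assumes "(\<exists>x\<in>set a. descends_to (int n) t x) \<longleftrightarrow> (\<exists>y\<in>set b. descends_to (int m) t y)"
  shows "(weyl_step n m)\<^sup>=\<^sup>= (lower_wt n m (t + 1) (a, b)) (lower_wt n m t (a, b))"
proof (cases "\<exists>x\<in>set a. descends_to (int n) t x")
  case True
  then obtain k where k: "k < n" "descends_to (int n) t (a ! k)"
    using lengths(1) by (auto simp: in_set_conv_nth)
  obtain j where j: "j < m" "descends_to (int m) t (b ! j)"
    using True assms lengths(2) by (auto simp: in_set_conv_nth)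
  define a' b' where "a' = map (lower_to (int n) (t + 1)) a" and "b' = map (lower_to (int m) (t + 1)) b"
  have "lower_wt n m t (a, b) = (a'[k := a' ! k - int n], b'[j := b' ! j - int m])"
    and "a' ! k - b' ! j = int n - int m"
    using map_lower_to_descends[of "int n" a k t] map_lower_to_descends[of "int m" b j t]
      pos lengths distinct_residues k j
    unfolding a'_def b'_def lower_wt_def by simp_all
  then have "\<exists>i<n. \<exists>j<m. a' ! i - b' ! j = int n - int m \<and>
      lower_wt n m t (a, b) = (a'[i := a' ! i - int n], b'[j := b' ! j - int m])"
    using k(1) j(1) by blast
  moreover have "length a' = n" "length b' = m"
    using lengths unfolding a'_def b'_def by simp_all
  ultimately have "weyl_step n m (a', b') (lower_wt n m t (a, b))"
    unfolding weyl_step_def Let_def fst_conv snd_conv by (intro conjI disjI2)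
  then show ?thesis
    unfolding lower_wt_def a'_def b'_def by simp
next
  case False
  then show ?thesis
    using assms pos unfolding lower_wt_def by (simp add: lower_to_succ_eq)
qed

lemma weyl_steps_lower_wt:
  assumes "\<And>t. 0 \<le> t \<Longrightarrow> t < int d \<Longrightarrow>
    (\<exists>x\<in>set a. descends_to (int n) t x) \<longleftrightarrow> (\<exists>y\<in>set b. descends_to (int m) t y)"
  shows "(weyl_step n m)\<^sup>*\<^sup>* (lower_wt n m (int d) (a, b)) (lower_wt n m 0 (a, b))"
  using assms
proof (induction d)
  case (Suc d)
  have "(weyl_step n m)\<^sup>=\<^sup>= (lower_wt n m (int d + 1) (a, b)) (lower_wt n m (int d) (a, b))"
    using Suc.prems by (intro weyl_step_lower_wt) simp
  then have "(weyl_step n m)\<^sup>*\<^sup>* (lower_wt n m (int d + 1) (a, b)) (lower_wt n m (int d) (a, b))"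
    by (metis r_into_rtranclp rtranclp_reflclp)
  moreover have "(weyl_step n m)\<^sup>*\<^sup>* (lower_wt n m (int d) (a, b)) (lower_wt n m 0 (a, b))"
    using Suc by simp
  ultimately show ?case
    by (metis add.commute of_nat_Suc rtranclp_trans)
qed simp

theorem in_weyl_orbit_residues:
  assumes "\<forall>x\<in>set a. 0 \<le> x \<and> x \<le> int T" "\<forall>y\<in>set b. 0 \<le> y \<and> y \<le> int T"
    and "\<And>t. 0 \<le> t \<Longrightarrow> t < int T \<Longrightarrow>
      (\<exists>x\<in>set a. descends_to (int n) t x) \<longleftrightarrow> (\<exists>y\<in>set b. descends_to (int m) t y)"
  shows "in_weyl_orbit n m (a, b) (map int [0..<n], map int [0..<m])"
proof -
  have "lower_wt n m (int T) (a, b) = (a, b)"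
    using assms(1,2) by (simp add: lower_wt_def lower_to_le map_idI)
  moreover have "lower_wt n m 0 (a, b) = (map (\<lambda>x. x mod int n) a, map (\<lambda>y. y mod int m) b)"
    using assms(1,2) by (simp add: lower_wt_def lower_to_0)
  moreover have "(weyl_step n m)\<^sup>*\<^sup>* (map (\<lambda>x. x mod int n) a, map (\<lambda>y. y mod int m) b)
      (map int [0..<n], map int [0..<m])"
    using pos lengths distinct_residues
    by (intro weyl_steps_if_mset_eq mset_residues_eq_upt) simp_all
  ultimately show ?thesis
    unfolding in_weyl_orbit_def using weyl_steps_lower_wt[OF assms(3)] by (metis rtranclp_trans)
qed

end

lemma distinct_mult_residues:
  assumes "coprime p q"
  shows "distinct (map (\<lambda>i. int p * int i mod int q) [0..<q])"
proof -
  have "i = j" if "i < q" "j < q" "int p * int i mod int q = int p * int j mod int q" for i j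
  proof -
    have "[int i = int j] (mod int q)"
      using that(3) assms by (simp add: cong_def[symmetric] cong_mult_lcancel)
    then show ?thesis
      using that(1,2) cong_less_imp_eq_int[of "int i" "int q" "int j"] by simp
  qed
  then show ?thesis
    by (simp add: distinct_map inj_on_def)
qed

lemma descends_to_mult_swap:
  fixes p q i :: nat and t :: int
  assumes "0 < p" "i < q" "descends_to (int q) t (int p * int i)"
  shows "\<exists>j<p. descends_to (int p) t (int q * int j)"
proof -
  obtain k where k: "int p * int i - t = int q * k" and "t < int p * int i"
    using assms(3) unfolding descends_to_def by (auto elim: dvdE)
  then have "0 < int q * k"
    by linarith
  then have "0 < k"
    using assms(2) by (simp add: zero_less_mult_iff)
  \<comment> \<open>Choosing \<open>j \<equiv> -k (mod p)\<close> makes \<open>q j - t = q (j + k) - p i\<close> a multiple of \<open>p\<close>,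
    positive because \<open>j + k\<close> is a positive multiple of \<open>p\<close> and \<open>i < q\<close>.\<close>
  define j where "j = (- k) mod int p"
  have j: "0 \<le> j" "j < int p"
    unfolding j_def using assms(1) by simp_all
  have "int p dvd j + k"
    unfolding j_def by (simp add: dvd_eq_mod_eq_0 mod_add_left_eq)
  then obtain s where s: "j + k = int p * s"
    by (elim dvdE)
  with j \<open>0 < k\<close> have "0 < int p * s"
    by linarith
  then have "1 \<le> s"
    using assms(1) by (simp add: zero_less_mult_iff)
  then have "int q \<le> int q * s"
    using mult_left_mono[of 1 s "int q"] by simp
  then have "0 < int q * s - int i"
    using assms(2) by linarith
  have "int q * j - t = int q * (j + k) - int p * int i"
    using k by (simp add: algebra_simps)
  also have "\<dots> = int p * (int q * s - int i)"
    unfolding s by (simp add: algebra_simps)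
  finally have diff: "int q * j - t = int p * (int q * s - int i)" .
  moreover have "0 < int p * (int q * s - int i)"
    using \<open>0 < int q * s - int i\<close> assms(1) by simp
  ultimately have "descends_to (int p) t (int q * j)"
    unfolding descends_to_def by simp
  with j show ?thesis
    by (intro exI[of _ "nat j"]) auto
qed

lemma map_upt_reflect:
  "map (\<lambda>k. c * (int n - 1 - int k)) [0..<n] = rev (map (\<lambda>i. c * int i) [0..<n])"
  by (rule nth_equalityI) (simp_all add: rev_nth of_nat_diff)

theorem corollary6p5:
  fixes n m :: nat
  assumes "0 < n" and "n < m" and "coprime m n"
  shows "in_weyl_orbit n m
           (map (\<lambda>k. int m * (int n - 1 - int k)) [0..<n], map (\<lambda>k. int n * int k) [0..<m])
           (map int [0..<n], map int [0..<m])"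
  unfolding map_upt_reflect
proof (rule in_weyl_orbit_residues[where T = "m * n"])
  show "distinct (map (\<lambda>x. x mod int n) (rev (map (\<lambda>i. int m * int i) [0..<n])))"
    using distinct_mult_residues[OF assms(3)] by (simp add: rev_map[symmetric] comp_def)
  show "distinct (map (\<lambda>y. y mod int m) (map (\<lambda>j. int n * int j) [0..<m]))"
    using distinct_mult_residues[of n m] assms(3) by (simp add: comp_def coprime_commute)
  show "(\<exists>x\<in>set (rev (map (\<lambda>i. int m * int i) [0..<n])). descends_to (int n) t x) \<longleftrightarrow>
      (\<exists>y\<in>set (map (\<lambda>j. int n * int j) [0..<m]). descends_to (int m) t y)" for t
    using descends_to_mult_swap[of m _ n t] descends_to_mult_swap[of n _ m t] assms(1,2)
    by (auto simp: Bex_def)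
qed (use assms in \<open>auto simp: mult_left_mono mult_right_mono\<close>)

end
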